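(* The group $G=\langle\sigma_1,\sigma_2,\sigma_3\rangle$ of birational transformations of $\overline{\mathcal{S}}(\theta)$ is a universal Coxeter group of rank three on the generators $\sigma_1,\sigma_2,\sigma_3$; that is, there are no relations other than those generated by $\sigma_1^2=\sigma_2^2=\sigma_3^2=1$. In particular, every element of $G$ other than the identity has a unique expression $\sigma_{i_1}\sigma_{i_2}\cdots\sigma_{i_n}$ with $n\ge1$ and $i_\nu\ne i_{\nu+1}$ for all $\nu$.
   Context: Let $\kappa\in\mathcal{K}=\{\kappa\in\mathbb{C}^5:2\kappa_0+\kappa_1+\dots+\kappa_4=1\}$ lie outside $\mathrm{Wall}$ (union of the hyperplanes $\kappa_i=m$, $i=1,\dots,4$, and $\kappa_1\pm\kappa_2\pm\kappa_3\pm\kappa_4=2m+1$, $m\in\mathbb{Z}$), and $\theta=\mathrm{rh}(\kappa)$: $a_i=2\cos\pi\kappa_i$ ($i=1,2,3$), $a_4=-2\cos\pi\kappa_4$, $\theta_i=a_ia_4+a_ja_k$ ($\{i,j,k\}=\{1,2,3\}$), $\theta_4=a_1a_2a_3a_4+\sum_{l=1}^4a_l^2-4$; $\overline{\mathcal{S}}(\theta)\subset\mathbb{P}^3$ is the (smooth) cubic surface $X_1X_2X_3+X_0(X_1^2+X_2^2+X_3^2)-X_0^2(\theta_1X_1+\theta_2X_2+\theta_3X_3)+\theta_4X_0^3=0$. For $\{i,j,k\}=\{1,2,3\}$, $\sigma_i$ is the birational involution of $\overline{\mathcal{S}}(\theta)$ given by $X'_0=X_0^2$, $X'_i=\theta_iX_0^2-X_0X_i-X_jX_k$,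 $X'_j=X_0X_j$, $X'_k=X_0X_k$ (on the affine part $x=(X_1/X_0,X_2/X_0,X_3/X_0)$: $(x_i,x_j,x_k)\mapsto(\theta_i-x_i-x_jx_k,x_j,x_k)$). *)

theory Defs
  imports Complex_Main
begin

text \<open>Parameters kappa = (k 0, ..., k 4); values of k at other indices are irrelevant.\<close>

definition in_K :: "(nat \<Rightarrow> complex) \<Rightarrow> bool" where
  "in_K k \<longleftrightarrow> 2 * k 0 + k 1 + k 2 + k 3 + k 4 = 1"

definition in_Wall :: "(nat \<Rightarrow> complex) \<Rightarrow> bool" where
  "in_Wall k \<longleftrightarrow>
     (\<exists>i\<in>{1..4::nat}. \<exists>m::int. k i = of_int m) \<or>
     (\<exists>e2\<in>{1, -1::complex}. \<exists>e3\<in>{1, -1::complex}. \<exists>e4\<in>{1, -1::complex}. \<exists>m::int.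
        k 1 + e2 * k 2 + e3 * k 3 + e4 * k 4 = of_int (2 * m + 1))"

definition rh_a :: "(nat \<Rightarrow> complex) \<Rightarrow> nat \<Rightarrow> complex" where
  "rh_a k i = (if i = 4 then - 2 * cos (of_real pi * k 4) else 2 * cos (of_real pi * k i))"

text \<open>theta = rh(kappa), indexed 1..4.\<close>
definition rh :: "(nat \<Rightarrow> complex) \<Rightarrow> nat \<Rightarrow> complex" where
  "rh k i = (let a = rh_a k in
     if i = 1 then a 1 * a 4 + a 2 * a 3
     else if i = 2 then a 2 * a 4 + a 1 * a 3
     else if i = 3 then a 3 * a 4 + a 1 * a 2
     else a 1 * a 2 * a 3 * a 4 + a 1 ^ 2 + a 2 ^ 2 + a 3 ^ 2 + a 4 ^ 2 - 4)"

text \<open>Affine part (X0 = 1) of the cubic surface S-bar(theta), coordinates (x1,x2,x3).\<close>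
definition affine_surface :: "(nat \<Rightarrow> complex) \<Rightarrow> (complex \<times> complex \<times> complex) set" where
  "affine_surface th = {(x1, x2, x3).
     x1 * x2 * x3 + (x1 ^ 2 + x2 ^ 2 + x3 ^ 2) - (th 1 * x1 + th 2 * x2 + th 3 * x3) + th 4 = 0}"

definition sigma :: "(nat \<Rightarrow> complex) \<Rightarrow> nat \<Rightarrow> complex \<times> complex \<times> complex \<Rightarrow> complex \<times> complex \<times> complex" where
  "sigma th i = (\<lambda>(x1, x2, x3).
     if i = 1 then (th 1 - x1 - x2 * x3, x2, x3)
     else if i = 2 then (x1, th 2 - x2 - x1 * x3, x3)
     else (x1, x2, th 3 - x3 - x1 * x2))"

definition word_map :: "(nat \<Rightarrow> complex) \<Rightarrow> nat list \<Rightarrow> complex \<times> complex \<times> complex \<Rightarrow> complex \<times> complex \<times> complex" where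
  "word_map th ws = foldr (\<lambda>i f. sigma th i \<circ> f) ws id"

definition reduced_word :: "nat list \<Rightarrow> bool" where
  "reduced_word ws \<longleftrightarrow> set ws \<subseteq> {1, 2, 3} \<and> (\<forall>n. Suc n < length ws \<longrightarrow> ws ! n \<noteq> ws ! Suc n)"

end

theory Submission
  imports Defs "HOL-Library.Sublist"
begin

text \<open>Ping-pong. Call a point \<open>i\<close>-dominant if its \<open>i\<close>-th coordinate is strictly the largest in
  modulus, and far if all its coordinates have modulus at least \<open>M\<close>, where \<open>M \<ge> 3 + |\<theta>\<^sub>j|\<close>.
  On a far point that is not \<open>i\<close>-dominant, \<open>\<sigma>\<^sub>i\<close> replaces \<open>x\<^sub>i\<close> by
  \<open>\<theta>\<^sub>i - x\<^sub>i - x\<^sub>j x\<^sub>k\<close>, whose modulus exceeds \<open>max |x\<^sub>j| |x\<^sub>k|\<close>, so the image is far and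
  \<open>i\<close>-dominant. Hence a reduced word sends a far point that is not dominant at its last letter
  into the dominance region of its first letter. Cancelling the common prefix of two distinct
  reduced words (the \<open>\<sigma>\<^sub>i\<close> are involutions) leaves two words with different first letters, or
  a nonempty word and the empty one; a far point on the surface with suitable non-dominance
  separates them.\<close>

definition dominant :: "nat \<Rightarrow> complex \<times> complex \<times> complex \<Rightarrow> bool" where
  "dominant i = (\<lambda>(x1, x2, x3).
     if i = 1 then norm x2 < norm x1 \<and> norm x3 < norm x1
     else if i = 2 then norm x1 < norm x2 \<and> norm x3 < norm x2
     else norm x1 < norm x3 \<and> norm x2 < norm x3)"

definition far :: "real \<Rightarrow> complex \<times> complex \<times> complex \<Rightarrow> bool" where
  "far M = (\<lambda>(x1, x2, x3). M \<le> norm x1 \<and> M \<le> norm x2 \<and> M \<le> norm x3)"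

lemma dominant_unique:
  assumes "dominant i x" "dominant j x" "i \<in> {1, 2, 3}" "j \<in> {1, 2, 3}"
  shows "i = j"
  using assms by (cases x) (auto simp: dominant_def split: if_splits)

lemma norm_reflection_gt:
  fixes a b c t :: "'a::real_normed_div_algebra" and M :: real
  assumes "M \<le> norm b" "M \<le> norm c" "norm a \<le> max (norm b) (norm c)" "3 + norm t \<le> M"
  shows "max (norm b) (norm c) < norm (t - a - b * c)"
proof -
  define m where "m = max (norm b) (norm c)"
  have "0 \<le> M" using assms(4) norm_ge_zero[of t] by linarith
  have "norm b \<le> m" by (simp add: m_def)
  then have "3 \<le> m" using assms(1,4) norm_ge_zero[of t] by linarith
  have "M * norm c \<le> norm b * norm c" "M * norm b \<le> norm c * norm b"
    using assms(1,2) \<open>0 \<le> M\<close> by (simp_all add: mult_right_mono)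
  then have "M * m \<le> norm (b * c)"
    by (simp add: m_def max_def norm_mult mult.commute)
  moreover have "norm (b * c) \<le> norm (t - a) + norm (t - a - b * c)"
    using norm_triangle_ineq4[of "t - a" "t - a - b * c"] by simp
  moreover have "norm (t - a) \<le> norm t + norm a" by (rule norm_triangle_ineq4)
  moreover have "3 * m + norm t * m \<le> M * m"
    using mult_right_mono[OF assms(4), of m] \<open>3 \<le> m\<close> by (simp add: distrib_right)
  moreover have "norm t * 1 \<le> norm t * m" using \<open>3 \<le> m\<close> by (intro mult_left_mono) auto
  ultimately show ?thesis using assms(3) \<open>3 \<le> m\<close> unfolding m_def[symmetric] by linarith
qed

lemma quadratic_has_large_root:
  fixes b c :: complex
  shows "\<exists>z. z\<^sup>2 + b * z + c = 0 \<and> norm b \<le> 2 * norm z"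
proof -
  define s where "s = csqrt (b\<^sup>2 - 4 * c)"
  have s: "s\<^sup>2 = b\<^sup>2 - 4 * c" by (simp add: s_def)
  have root: "z\<^sup>2 + b * z + c = 0" if "z = (- b + s) / 2 \<or> z = (- b - s) / 2" for z
    using that s by (auto simp: field_simps power2_eq_square) algebra+
  have "- b = (- b + s) / 2 + (- b - s) / 2" by (simp add: field_simps)
  then have "norm b \<le> norm ((- b + s) / 2) + norm ((- b - s) / 2)"
    by (metis norm_minus_cancel norm_triangle_ineq)
  then have "norm b \<le> 2 * norm ((- b + s) / 2) \<or> norm b \<le> 2 * norm ((- b - s) / 2)"
    by linarith
  then show ?thesis using root by blast
qed

lemma sigma_affine_surface:
  "x \<in> affine_surface th \<Longrightarrow> sigma th i x \<in> affine_surface th"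
  by (cases x) (auto simp: affine_surface_def sigma_def; simp add: algebra_simps power2_eq_square)

lemma reduced_word_letter: "reduced_word w \<Longrightarrow> i \<in> set w \<Longrightarrow> i \<in> {1, 2, 3}"
  by (auto simp: reduced_word_def)

lemma reduced_word_Cons:
  "reduced_word (i # w) \<longleftrightarrow> i \<in> {1, 2, 3} \<and> (w \<noteq> [] \<longrightarrow> i \<noteq> hd w) \<and> reduced_word w"
  by (auto simp: reduced_word_def nth_Cons hd_conv_nth split: nat.splits)

lemma reduced_word_appendD: "reduced_word (u @ w) \<Longrightarrow> reduced_word w"
  by (induction u) (auto simp: reduced_word_Cons)

lemma word_map_Nil [simp]: "word_map th [] = id"
  by (simp add: word_map_def)

lemma word_map_Cons [simp]: "word_map th (i # w) = sigma th i \<circ> word_map th w"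
  by (simp add: word_map_def)

lemma word_map_append: "word_map th (u @ w) = word_map th u \<circ> word_map th w"
  by (induction u) auto

lemma sigma_sigma [simp]: "sigma th i (sigma th i x) = x"
  by (cases x) (auto simp: sigma_def)

lemma inj_word_map: "inj (word_map th w)"
proof (induction w)
  case (Cons i w)
  have "inj (sigma th i)" by (metis injI sigma_sigma)
  with Cons show ?case by (metis word_map_Cons inj_compose)
qed simp

locale ping_pong =
  fixes th :: "nat \<Rightarrow> complex" and M :: real
  assumes large: "\<And>j. j \<in> {1, 2, 3} \<Longrightarrow> 3 + norm (th j) \<le> M"
begin

lemma sigma_dominant:
  assumes "i \<in> {1, 2, 3}" "far M x" "\<not> dominant i x"
  shows "dominant i (sigma th i x) \<and> far M (sigma th i x)"
proof -
  obtain x1 x2 x3 where x: "x = (x1, x2, x3)" by (cases x)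
  consider "i = 1" | "i = 2" | "i = 3" using assms(1) by blast
  then show ?thesis
  proof cases
    case 1
    have "max (norm x2) (norm x3) < norm (th 1 - x1 - x2 * x3)"
      using assms large[of 1] by (intro norm_reflection_gt) (auto simp: x far_def dominant_def 1)
    then show ?thesis using assms(2) by (auto simp: x far_def dominant_def sigma_def 1)
  next
    case 2
    have "max (norm x1) (norm x3) < norm (th 2 - x2 - x1 * x3)"
      using assms large[of 2] by (intro norm_reflection_gt) (auto simp: x far_def dominant_def 2)
    then show ?thesis using assms(2) by (auto simp: x far_def dominant_def sigma_def 2)
  next
    case 3
    have "max (norm x1) (norm x2) < norm (th 3 - x3 - x1 * x2)"
      using assms large[of 3] by (intro norm_reflection_gt) (auto simp: x far_def dominant_def 3)
    then show ?thesis using assms(2) by (auto simp: x far_def dominant_def sigma_def 3)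
  qed
qed

lemma dominant_word_map:
  assumes "reduced_word w" "w \<noteq> []" "far M x" "\<not> dominant (last w) x"
  shows "dominant (hd w) (word_map th w x) \<and> far M (word_map th w x)"
  using assms(1,2,4)
proof (induction w)
  case (Cons i w)
  show ?case
  proof (cases "w = []")
    case True
    with Cons.prems assms(3) show ?thesis by (simp add: reduced_word_Cons sigma_dominant)
  next
    case False
    with Cons have IH: "dominant (hd w) (word_map th w x) \<and> far M (word_map th w x)"
      by (simp add: reduced_word_Cons)
    from False Cons.prems have "i \<noteq> hd w" "i \<in> {1, 2, 3}" "hd w \<in> {1, 2, 3}"
      using reduced_word_letter[OF _ hd_in_set] by (auto simp: reduced_word_Cons)
    with IH have "\<not> dominant i (word_map th w x)" using dominant_unique by blast
    with IH \<open>i \<in> {1, 2, 3}\<close> show ?thesis by (simp add: sigma_dominant)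
  qed
qed simp

lemma surface_point_tied:
  "\<exists>x \<in> affine_surface th. far M x \<and> \<not> dominant 1 x \<and> \<not> dominant 2 x"
proof -
  \<comment> \<open>The point \<open>(M, M, r)\<close>, with \<open>r\<close> a large root of the surface equation in \<open>x\<^sub>3\<close>.\<close>
  define t where "t = complex_of_real M"
  obtain r where r: "r\<^sup>2 + (t\<^sup>2 - th 3) * r + (2 * t\<^sup>2 - (th 1 + th 2) * t + th 4) = 0"
      "norm (t\<^sup>2 - th 3) \<le> 2 * norm r"
    using quadratic_has_large_root by blast
  have M: "3 + norm (th 3) \<le> M" using large by simp
  then have "3 \<le> M" using norm_ge_zero[of "th 3"] by linarith
  then have t: "norm t = M" by (simp add: t_def)
  have "M * M - norm (th 3) \<le> norm (t\<^sup>2 - th 3)"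
    using norm_triangle_ineq2[of "t\<^sup>2" "th 3"] t by (simp add: norm_power power2_eq_square norm_mult)
  moreover have "3 * M \<le> M * M" using \<open>3 \<le> M\<close> by (intro mult_right_mono) auto
  ultimately have "M \<le> norm r" using r(2) M by linarith
  moreover have "(t, t, r) \<in> affine_surface th"
    using r(1) by (simp add: affine_surface_def algebra_simps power2_eq_square)
  ultimately show ?thesis using t by (intro bexI[of _ "(t, t, r)"]) (auto simp: far_def dominant_def)
qed

lemma surface_point_nondominant:
  assumes "a \<in> {1, 2, 3}" "b \<in> {1, 2, 3}"
  shows "\<exists>x \<in> affine_surface th. far M x \<and> \<not> dominant a x \<and> \<not> dominant b x"
proof -
  obtain p where p: "p \<in> affine_surface th" "far M p" "\<not> dominant 1 p" "\<not> dominant 2 p"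
    using surface_point_tied by blast
  have reflected: "\<exists>x \<in> affine_surface th. far M x \<and> \<not> dominant a x \<and> \<not> dominant b x"
    if "i \<in> {1, 2}" "i \<noteq> a" "i \<noteq> b" for i
  proof -
    from p that have "dominant i (sigma th i p)" "far M (sigma th i p)"
      using sigma_dominant[of i p] by auto
    moreover from this that assms have "\<not> dominant a (sigma th i p)" "\<not> dominant b (sigma th i p)"
      using dominant_unique[of i "sigma th i p"] by auto
    ultimately show ?thesis using sigma_affine_surface[OF p(1)] by blast
  qed
  consider "{a, b} \<subseteq> {1, 2}" | "{a, b} \<subseteq> {2, 3}" | "{a, b} \<subseteq> {1, 3}"
    using assms by auto
  then show ?thesis
  proof cases
    case 1
    with p show ?thesis by auto
  next
    case 2
    then show ?thesis using reflected[of 1] by auto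
  next
    case 3
    then show ?thesis using reflected[of 2] by auto
  qed
qed

lemma word_map_moves_point:
  assumes "reduced_word w" "w \<noteq> []"
  shows "\<exists>x \<in> affine_surface th. word_map th w x \<noteq> x"
proof -
  have "hd w \<in> {1, 2, 3}" "last w \<in> {1, 2, 3}"
    using assms reduced_word_letter by simp_all
  then obtain x where x: "x \<in> affine_surface th" "far M x" "\<not> dominant (hd w) x" "\<not> dominant (last w) x"
    using surface_point_nondominant by blast
  then have "dominant (hd w) (word_map th w x)" using assms dominant_word_map by blast
  with x(3) have "word_map th w x \<noteq> x" by auto
  with x(1) show ?thesis by blast
qed

lemma word_maps_differ_Cons:
  assumes "reduced_word (i # w)" "reduced_word (j # v)" "i \<noteq> j"
  shows "\<exists>x \<in> affine_surface th. word_map th (i # w) x \<noteq> word_map th (j # v) x"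
proof -
  have letters: "i \<in> {1, 2, 3}" "j \<in> {1, 2, 3}" "last (i # w) \<in> {1, 2, 3}" "last (j # v) \<in> {1, 2, 3}"
    using assms(1,2)[THEN reduced_word_letter] by simp_all
  then obtain x where x: "x \<in> affine_surface th" "far M x"
      "\<not> dominant (last (i # w)) x" "\<not> dominant (last (j # v)) x"
    using surface_point_nondominant by blast
  then have "dominant i (word_map th (i # w) x)" "dominant j (word_map th (j # v) x)"
    using assms(1,2)[THEN dominant_word_map] by auto
  with letters assms(3) x(1) show ?thesis using dominant_unique by metis
qed

lemma word_map_append_moves_point:
  assumes "reduced_word (u @ w)" "w \<noteq> []"
  shows "\<exists>x \<in> affine_surface th. word_map th (u @ w) x \<noteq> word_map th u x"
  using word_map_moves_point[OF reduced_word_appendD[OF assms(1)] assms(2)]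
  by (auto simp: word_map_append inj_eq[OF inj_word_map])

lemma word_maps_differ:
  assumes "reduced_word ws" "reduced_word vs" "ws \<noteq> vs"
  shows "\<exists>x \<in> affine_surface th. word_map th ws x \<noteq> word_map th vs x"
proof (cases ws vs rule: prefix_cases)
  case 1
  then obtain v where "vs = ws @ v" "v \<noteq> []" using assms(3) by (auto elim: prefixE)
  with assms(2) show ?thesis using word_map_append_moves_point by metis
next
  case 2
  then obtain w where "ws = vs @ w" "w \<noteq> []" by (auto elim: strict_prefixE')
  with assms(1) show ?thesis using word_map_append_moves_point by metis
next
  case 3
  then obtain u i w j v where "i \<noteq> j" "ws = u @ i # w" "vs = u @ j # v"
    using parallel_decomp by blast
  with assms(1,2) show ?thesis
    using word_maps_differ_Cons[of i w j v] reduced_word_appendD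
    by (auto simp: word_map_append inj_eq[OF inj_word_map])
qed

end

theorem theorem7p7:
  fixes k :: "nat \<Rightarrow> complex" and ws vs :: "nat list"
  assumes "in_K k" and "\<not> in_Wall k"
    and "reduced_word ws" and "reduced_word vs" and "ws \<noteq> vs"
  shows "\<exists>x \<in> affine_surface (rh k). word_map (rh k) ws x \<noteq> word_map (rh k) vs x"
proof -
  interpret ping_pong "rh k" "3 + norm (rh k 1) + norm (rh k 2) + norm (rh k 3)"
    by unfold_locales auto
  show ?thesis using assms(3-5) by (rule word_maps_differ)
qed

end
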